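(* (i) Let $L,L',L''$ be simplicial complexes, and let $\varphi_i: L\to L'$ and $\psi_i: L'\to L''$ be simplicial maps for $i=1,\dots,m$. If $\psi_i\sim\psi_{i+1}$ for all $i=1,\dots,m-1$, then $\mathrm{SD}(\psi_1\circ\varphi_1,\dots,\psi_m\circ\varphi_m)\le\mathrm{SD}(\varphi_1,\dots,\varphi_m)$. Moreover, equality holds provided that for all $i$, $\psi_i$ admits a simplicial map $\mu_i: L''\to L'$ with $\mu_i\circ\psi_i\sim 1_{L'}$, and $\psi_i\circ\varphi_i\sim\psi_j\circ\varphi_j$ for all distinct $i,j$. (ii) Let $\varphi_i: L\to L'$ and $\psi_i: L''\to L$ be simplicial maps for $i=1,\dots,m$. If $\psi_i\sim\psi_{i+1}$ for all $i=1,\dots,m-1$, then $\mathrm{SD}(\varphi_1\circ\psi_1,\dots,\varphi_m\circ\psi_m)\le\mathrm{SD}(\varphi_1,\dots,\varphi_m)$. Moreover, equality holds provided that for all $i$, $\psi_i$ admits a simplicial map $\mu_i: L\to L''$ with $\psi_i\circ\mu_i\sim 1_L$, and $\varphi_i\circ\psi_i\sim\varphi_j\circ\psi_j$ for all distinct $i,j$.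
   Context: Simplicial maps $f,g: K\to K'$ are contiguous if $f(\sigma)\cup g(\sigma)$ is a simplex of $K'$ for every simplex $\sigma$ of $K$; $f\sim g$ (same contiguity class) if there is a finite chain of simplicial maps from $f$ to $g$ with consecutive ones contiguous. For simplicial maps $\varphi_1,\dots,\varphi_m: K\to K'$, $\mathrm{SD}(\varphi_1,\dots,\varphi_m)$ is the least $n\ge0$ such that $K$ is a union of subcomplexes $K_0,\dots,K_n$ with $\varphi_i|_{K_k}\sim\varphi_j|_{K_k}$ for all $i,j$ and $k$. *)

theory Defs
  imports Main "HOL-Library.Extended_Nat"
begin

definition simplicial_complex :: "'a set set \<Rightarrow> bool" where
  "simplicial_complex K \<longleftrightarrow>
     (\<forall>\<sigma>\<in>K. finite \<sigma> \<and> \<sigma> \<noteq> {}) \<and>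
     (\<forall>\<sigma>\<in>K. \<forall>\<tau>. \<tau> \<subseteq> \<sigma> \<and> \<tau> \<noteq> {} \<longrightarrow> \<tau> \<in> K)"

definition subcomplex :: "'a set set \<Rightarrow> 'a set set \<Rightarrow> bool" where
  "subcomplex J K \<longleftrightarrow> J \<subseteq> K \<and> simplicial_complex J"

text \<open>Simplicial map K \<rightarrow> K' (given by its vertex map; only values on
  vertices of K matter).\<close>
definition simplicial_map :: "'a set set \<Rightarrow> 'b set set \<Rightarrow> ('a \<Rightarrow> 'b) \<Rightarrow> bool" where
  "simplicial_map K K' f \<longleftrightarrow> (\<forall>\<sigma>\<in>K. f ` \<sigma> \<in> K')"

definition contiguous :: "'a set set \<Rightarrow> 'b set set \<Rightarrow> ('a \<Rightarrow> 'b) \<Rightarrow> ('a \<Rightarrow> 'b) \<Rightarrow> bool" where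
  "contiguous K K' f g \<longleftrightarrow> (\<forall>\<sigma>\<in>K. f ` \<sigma> \<union> g ` \<sigma> \<in> K')"

definition contiguity_class :: "'a set set \<Rightarrow> 'b set set \<Rightarrow> ('a \<Rightarrow> 'b) \<Rightarrow> ('a \<Rightarrow> 'b) \<Rightarrow> bool" where
  "contiguity_class K K' f g \<longleftrightarrow>
     simplicial_map K K' f \<and> simplicial_map K K' g \<and>
     (\<lambda>u v. simplicial_map K K' u \<and> simplicial_map K K' v \<and> contiguous K K' u v)\<^sup>*\<^sup>* f g"

text \<open>Simplicial distance SD(\<phi>_1,...,\<phi>_m) of maps K \<rightarrow> K' (indexed by 1..m):
  least n such that K is a union of subcomplexes K_0..K_n on each of which all
  restrictions are in the same contiguity class; \<infinity> if no such n exists.\<close>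
definition SD :: "'a set set \<Rightarrow> 'b set set \<Rightarrow> nat \<Rightarrow> (nat \<Rightarrow> 'a \<Rightarrow> 'b) \<Rightarrow> enat" where
  "SD K K' m \<phi> = Inf {enat n | n. \<exists>Ks :: nat \<Rightarrow> 'a set set.
      (\<forall>k\<le>n. subcomplex (Ks k) K) \<and> (\<Union>k\<le>n. Ks k) = K \<and>
      (\<forall>k\<le>n. \<forall>i\<in>{1..m}. \<forall>j\<in>{1..m}. contiguity_class (Ks k) K' (\<phi> i) (\<phi> j))}"

end

theory Submission
  imports Defs
begin

text \<open>Contiguity classes are preserved by restriction to subcomplexes and by
  composition on either side. Hence a cover of \<open>L\<close> by subcomplexes on each of which all
  \<open>\<phi>\<^sub>i\<close> lie in one class pulls back along any simplicial map \<open>h : L\<^sub>2 \<rightarrow> L\<close> (keep the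
  simplices whose image lies in a piece) to a cover of \<open>L\<^sub>2\<close> of the same size on which
  all \<open>\<phi>\<^sub>i \<circ> h\<close> lie in one class. Since all \<open>\<psi>\<^sub>i\<close> are in one class, \<open>h = id\<close> gives
  \<open>SD(\<psi>\<^sub>i \<circ> \<phi>\<^sub>i) \<le> SD(\<phi>\<^sub>i)\<close> and \<open>h = \<psi>\<^sub>1\<close> gives \<open>SD(\<phi>\<^sub>i \<circ> \<psi>\<^sub>i) \<le> SD(\<phi>\<^sub>i)\<close>. For the
  reverse inequalities the \<open>\<psi>\<^sub>i\<close> are cancelled up to contiguity by their one-sided
  inverses \<open>\<mu>\<close>, pulling back along \<open>id\<close> and \<open>\<mu>\<close> respectively.\<close>

lemma simplicial_map_subset: "simplicial_map K K' f \<Longrightarrow> J \<subseteq> K \<Longrightarrow> simplicial_map J K' f"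
  by (auto simp: simplicial_map_def)

lemma simplicial_map_comp:
  "simplicial_map K K' f \<Longrightarrow> simplicial_map K' K'' g \<Longrightarrow> simplicial_map K K'' (g \<circ> f)"
  unfolding simplicial_map_def by (metis image_comp)

lemma simplicial_map_id: "simplicial_map K K id"
  by (simp add: simplicial_map_def)

lemma contiguity_class_transfer:
  assumes "contiguity_class K K' f g"
    and simplicial: "\<And>u. simplicial_map K K' u \<Longrightarrow> simplicial_map J J' (F u)"
    and contiguous: "\<And>u v. simplicial_map K K' u \<Longrightarrow> simplicial_map K K' v \<Longrightarrow>
                       contiguous K K' u v \<Longrightarrow> contiguous J J' (F u) (F v)"
  shows "contiguity_class J J' (F f) (F g)"
proof -
  have "(\<lambda>u v. simplicial_map J J' u \<and> simplicial_map J J' v \<and> contiguous J J' u v)\<^sup>*\<^sup>* (F u) (F v)"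
    if "(\<lambda>u v. simplicial_map K K' u \<and> simplicial_map K K' v \<and> contiguous K K' u v)\<^sup>*\<^sup>* u v" for u v
    using that
    by (induction rule: rtranclp_induct) (auto intro: rtranclp.rtrancl_into_rtrancl simplicial contiguous)
  then show ?thesis
    using assms(1) simplicial unfolding contiguity_class_def by blast
qed

lemma contiguity_class_refl: "simplicial_map K K' f \<Longrightarrow> contiguity_class K K' f f"
  by (simp add: contiguity_class_def)

lemma contiguity_class_sym:
  assumes "contiguity_class K K' f g"
  shows "contiguity_class K K' g f"
proof -
  let ?step = "\<lambda>u v. simplicial_map K K' u \<and> simplicial_map K K' v \<and> contiguous K K' u v"
  have "?step\<^sup>*\<^sup>* f g"
    using assms by (simp add: contiguity_class_def)
  then have "?step\<^sup>*\<^sup>* g f"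
  proof (induction rule: rtranclp_induct)
    case (step v w)
    then have "?step w v"
      by (simp add: contiguous_def Un_commute)
    from this step.IH show ?case
      by (rule converse_rtranclp_into_rtranclp)
  qed simp
  with assms show ?thesis
    by (simp add: contiguity_class_def)
qed

lemma contiguity_class_simplicial_map:
  "contiguity_class K K' f g \<Longrightarrow> simplicial_map K K' f \<and> simplicial_map K K' g"
  by (simp add: contiguity_class_def)

lemma contiguity_class_trans [trans]:
  "contiguity_class K K' f g \<Longrightarrow> contiguity_class K K' g h \<Longrightarrow> contiguity_class K K' f h"
  unfolding contiguity_class_def by auto

lemma contiguity_class_subset:
  "contiguity_class K K' f g \<Longrightarrow> J \<subseteq> K \<Longrightarrow> contiguity_class J K' f g"
  using contiguity_class_transfer[where F = id and J = J and J' = K']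
  by (simp add: simplicial_map_subset contiguous_def subset_iff)

lemma contiguity_class_comp_left:
  assumes "contiguity_class K K' f g" and "simplicial_map K' K'' h"
  shows "contiguity_class K K'' (h \<circ> f) (h \<circ> g)"
proof (rule contiguity_class_transfer[OF assms(1)])
  show "simplicial_map K K'' (h \<circ> u)" if "simplicial_map K K' u" for u
    using that assms(2) by (rule simplicial_map_comp)
  show "contiguous K K'' (h \<circ> u) (h \<circ> v)" if "contiguous K K' u v" for u v
    unfolding contiguous_def
  proof
    fix \<sigma> assume "\<sigma> \<in> K"
    then have "h ` (u ` \<sigma> \<union> v ` \<sigma>) \<in> K''"
      using that assms(2) unfolding contiguous_def simplicial_map_def by blast
    then show "(h \<circ> u) ` \<sigma> \<union> (h \<circ> v) ` \<sigma> \<in> K''"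
      by (simp add: image_Un image_comp)
  qed
qed

lemma contiguity_class_comp_right:
  assumes "contiguity_class K' K'' f g" and "simplicial_map K K' h"
  shows "contiguity_class K K'' (f \<circ> h) (g \<circ> h)"
proof (rule contiguity_class_transfer[OF assms(1)])
  show "simplicial_map K K'' (u \<circ> h)" if "simplicial_map K' K'' u" for u
    using assms(2) that by (rule simplicial_map_comp)
  show "contiguous K K'' (u \<circ> h) (v \<circ> h)" if "contiguous K' K'' u v" for u v
    unfolding contiguous_def
  proof
    fix \<sigma> assume "\<sigma> \<in> K"
    then have "u ` h ` \<sigma> \<union> v ` h ` \<sigma> \<in> K''"
      using that assms(2) unfolding contiguous_def simplicial_map_def by blast
    then show "(u \<circ> h) ` \<sigma> \<union> (v \<circ> h) ` \<sigma> \<in> K''"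
      by (simp add: image_comp)
  qed
qed

lemma contiguity_class_of_consecutive:
  assumes consecutive: "\<forall>i\<in>{1..<m}. contiguity_class K K' (\<psi> i) (\<psi> (Suc i))"
    and simplicial: "\<forall>i\<in>{1..m}. simplicial_map K K' (\<psi> i)"
    and "i \<in> {1..m}" "j \<in> {1..m}"
  shows "contiguity_class K K' (\<psi> i) (\<psi> j)"
proof -
  have forward: "contiguity_class K K' (\<psi> i) (\<psi> j)" if "i \<le> j" "i \<in> {1..m}" "j \<le> m" for i j
    using that(1)
  proof (induction j rule: dec_induct)
    case base
    show ?case using simplicial that(2) by (simp add: contiguity_class_refl)
  next
    case (step n)
    then have "contiguity_class K K' (\<psi> n) (\<psi> (Suc n))"
      using consecutive that by simp
    with step.IH show ?case by (rule contiguity_class_trans)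
  qed
  show ?thesis
    using assms(3,4) forward[of i j] forward[of j i] contiguity_class_sym
    by (metis atLeastAtMost_iff nat_le_linear)
qed

definition SD_cover :: "'a set set \<Rightarrow> 'b set set \<Rightarrow> nat \<Rightarrow> (nat \<Rightarrow> 'a \<Rightarrow> 'b) \<Rightarrow> nat \<Rightarrow> bool" where
  "SD_cover K K' m \<phi> n \<longleftrightarrow> (\<exists>Ks :: nat \<Rightarrow> 'a set set.
      (\<forall>k\<le>n. subcomplex (Ks k) K) \<and> (\<Union>k\<le>n. Ks k) = K \<and>
      (\<forall>k\<le>n. \<forall>i\<in>{1..m}. \<forall>j\<in>{1..m}. contiguity_class (Ks k) K' (\<phi> i) (\<phi> j)))"

lemma SD_eq_Inf_SD_cover: "SD K K' m \<phi> = Inf {enat n | n. SD_cover K K' m \<phi> n}"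
  unfolding SD_def SD_cover_def by simp

lemma SD_eq_0:
  assumes "simplicial_complex K"
    and "\<forall>i\<in>{1..m}. \<forall>j\<in>{1..m}. contiguity_class K K' (\<phi> i) (\<phi> j)"
  shows "SD K K' m \<phi> = 0"
proof -
  have "SD_cover K K' m \<phi> 0"
    unfolding SD_cover_def using assms by (intro exI[of _ "\<lambda>_. K"]) (simp add: subcomplex_def)
  then have "SD K K' m \<phi> \<le> 0"
    unfolding SD_eq_Inf_SD_cover zero_enat_def by (auto intro: Inf_lower)
  then show ?thesis by simp
qed

lemma subcomplex_preimage:
  assumes "subcomplex J K" and "simplicial_complex L"
  shows "subcomplex {\<tau> \<in> L. h ` \<tau> \<in> J} L"
proof -
  have face: "\<tau> \<in> L \<and> h ` \<tau> \<in> J" if "\<sigma> \<in> L" "h ` \<sigma> \<in> J" "\<tau> \<subseteq> \<sigma>" "\<tau> \<noteq> {}" for \<sigma> \<tau>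
  proof
    show "\<tau> \<in> L"
      using assms(2) that unfolding simplicial_complex_def by blast
    have "h ` \<tau> \<subseteq> h ` \<sigma>" "h ` \<tau> \<noteq> {}"
      using that by auto
    then show "h ` \<tau> \<in> J"
      using assms(1) that(2) unfolding subcomplex_def simplicial_complex_def by blast
  qed
  show ?thesis
    unfolding subcomplex_def simplicial_complex_def
  proof (intro conjI ballI allI impI)
    fix \<sigma> assume "\<sigma> \<in> {\<tau> \<in> L. h ` \<tau> \<in> J}"
    then show "finite \<sigma>" "\<sigma> \<noteq> {}"
      using assms(2) unfolding simplicial_complex_def by auto
  next
    fix \<sigma> \<tau> assume "\<sigma> \<in> {\<tau> \<in> L. h ` \<tau> \<in> J}" "\<tau> \<subseteq> \<sigma> \<and> \<tau> \<noteq> {}"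
    then show "\<tau> \<in> {\<tau> \<in> L. h ` \<tau> \<in> J}"
      using face[of \<sigma> \<tau>] by simp
  qed auto
qed

lemma SD_cover_pullback:
  assumes cover: "SD_cover L L' m \<phi> n" and "simplicial_complex L\<^sub>2" and h: "simplicial_map L\<^sub>2 L h"
    and good: "\<And>J i j. J \<subseteq> L\<^sub>2 \<Longrightarrow> i \<in> {1..m} \<Longrightarrow> j \<in> {1..m} \<Longrightarrow>
               contiguity_class J L' (\<phi> i \<circ> h) (\<phi> j \<circ> h) \<Longrightarrow> contiguity_class J L\<^sub>2' (\<chi> i) (\<chi> j)"
  shows "SD_cover L\<^sub>2 L\<^sub>2' m \<chi> n"
proof -
  obtain Ks where subcomplexes: "\<forall>k\<le>n. subcomplex (Ks k) L" and union: "(\<Union>k\<le>n. Ks k) = L"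
    and classes: "\<forall>k\<le>n. \<forall>i\<in>{1..m}. \<forall>j\<in>{1..m}. contiguity_class (Ks k) L' (\<phi> i) (\<phi> j)"
    using cover unfolding SD_cover_def by blast
  define Js where "Js k = {\<tau> \<in> L\<^sub>2. h ` \<tau> \<in> Ks k}" for k
  have "(\<Union>k\<le>n. Js k) = L\<^sub>2"
    using h union unfolding Js_def simplicial_map_def by blast
  moreover have "contiguity_class (Js k) L\<^sub>2' (\<chi> i) (\<chi> j)" if "k \<le> n" "i \<in> {1..m}" "j \<in> {1..m}" for k i j
  proof (rule good)
    have "simplicial_map (Js k) (Ks k) h"
      unfolding Js_def simplicial_map_def by auto
    then show "contiguity_class (Js k) L' (\<phi> i \<circ> h) (\<phi> j \<circ> h)"
      using classes that contiguity_class_comp_right by blast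
  qed (use that in \<open>auto simp: Js_def\<close>)
  moreover have "subcomplex (Js k) L\<^sub>2" if "k \<le> n" for k
    unfolding Js_def using subcomplexes that by (blast intro: subcomplex_preimage[OF _ assms(2)])
  ultimately show ?thesis
    unfolding SD_cover_def by blast
qed

lemma SD_le_pullback:
  assumes "simplicial_complex L\<^sub>2" and "simplicial_map L\<^sub>2 L h"
    and "\<And>J i j. J \<subseteq> L\<^sub>2 \<Longrightarrow> i \<in> {1..m} \<Longrightarrow> j \<in> {1..m} \<Longrightarrow>
           contiguity_class J L' (\<phi> i \<circ> h) (\<phi> j \<circ> h) \<Longrightarrow> contiguity_class J L\<^sub>2' (\<chi> i) (\<chi> j)"
  shows "SD L\<^sub>2 L\<^sub>2' m \<chi> \<le> SD L L' m \<phi>"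
  unfolding SD_eq_Inf_SD_cover
  by (rule Inf_superset_mono) (auto intro: SD_cover_pullback[OF _ assms])

lemma SD_comp_left_le:
  assumes "simplicial_complex L"
    and \<phi>: "\<forall>i\<in>{1..m}. simplicial_map L L' (\<phi> i)"
    and \<psi>: "\<forall>i\<in>{1..m}. \<forall>j\<in>{1..m}. contiguity_class L' L'' (\<psi> i) (\<psi> j)"
  shows "SD L L'' m (\<lambda>i. \<psi> i \<circ> \<phi> i) \<le> SD L L' m \<phi>"
proof (rule SD_le_pullback[OF assms(1) simplicial_map_id])
  fix J i j assume J: "J \<subseteq> L" and ij: "i \<in> {1..m}" "j \<in> {1..m}"
    and "contiguity_class J L' (\<phi> i \<circ> id) (\<phi> j \<circ> id)"
  then have "contiguity_class J L'' (\<psi> i \<circ> \<phi> i) (\<psi> i \<circ> \<phi> j)"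
    using \<psi> contiguity_class_simplicial_map contiguity_class_comp_left by fastforce
  also have "contiguity_class J L'' \<dots> (\<psi> j \<circ> \<phi> j)"
    using \<phi> \<psi> ij J by (blast intro: contiguity_class_comp_right simplicial_map_subset)
  finally show "contiguity_class J L'' (\<psi> i \<circ> \<phi> i) (\<psi> j \<circ> \<phi> j)" .
qed

lemma SD_comp_left_ge:
  assumes "simplicial_complex L"
    and \<phi>: "\<forall>i\<in>{1..m}. simplicial_map L L' (\<phi> i)"
    and \<psi>: "\<forall>i\<in>{1..m}. \<forall>j\<in>{1..m}. contiguity_class L' L'' (\<psi> i) (\<psi> j)"
    and left_inverse: "\<forall>i\<in>{1..m}. \<exists>\<mu>. simplicial_map L'' L' \<mu> \<and> contiguity_class L' L' (\<mu> \<circ> \<psi> i) id"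
  shows "SD L L' m \<phi> \<le> SD L L'' m (\<lambda>i. \<psi> i \<circ> \<phi> i)"
proof (rule SD_le_pullback[OF assms(1) simplicial_map_id])
  fix J i j assume J: "J \<subseteq> L" and ij: "i \<in> {1..m}" "j \<in> {1..m}"
    and composites: "contiguity_class J L'' (\<psi> i \<circ> \<phi> i \<circ> id) (\<psi> j \<circ> \<phi> j \<circ> id)"
  obtain \<mu> where \<mu>: "simplicial_map L'' L' \<mu>" and \<mu>\<psi>: "contiguity_class L' L' (\<mu> \<circ> \<psi> i) id"
    using left_inverse ij by blast
  have \<phi>J: "simplicial_map J L' (\<phi> i)" "simplicial_map J L' (\<phi> j)"
    using \<phi> ij J simplicial_map_subset by blast+
  have "contiguity_class J L' (\<phi> i) (\<mu> \<circ> \<psi> i \<circ> \<phi> i)"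
    using contiguity_class_comp_right[OF contiguity_class_sym[OF \<mu>\<psi>] \<phi>J(1)] by simp
  also have "contiguity_class J L' \<dots> (\<mu> \<circ> \<psi> j \<circ> \<phi> j)"
    using contiguity_class_comp_left[OF composites \<mu>] by (simp add: comp_assoc)
  also have "contiguity_class J L' \<dots> (\<mu> \<circ> \<psi> i \<circ> \<phi> j)"
    using \<psi> ij \<mu> \<phi>J(2) by (blast intro: contiguity_class_comp_right contiguity_class_comp_left)
  also have "contiguity_class J L' \<dots> (\<phi> j)"
    using contiguity_class_comp_right[OF \<mu>\<psi> \<phi>J(2)] by simp
  finally show "contiguity_class J L' (\<phi> i) (\<phi> j)" .
qed

lemma SD_comp_right_le:
  assumes "simplicial_complex L''"
    and \<phi>: "\<forall>i\<in>{1..m}. simplicial_map L L' (\<phi> i)"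
    and \<psi>: "\<forall>i\<in>{1..m}. \<forall>j\<in>{1..m}. contiguity_class L'' L (\<psi> i) (\<psi> j)"
  shows "SD L'' L' m (\<lambda>i. \<phi> i \<circ> \<psi> i) \<le> SD L L' m \<phi>"
proof (cases "m = 0")
  case True
  then have "SD L'' L' m (\<lambda>i. \<phi> i \<circ> \<psi> i) = 0"
    by (simp add: SD_eq_0 assms(1))
  then show ?thesis by simp
next
  case False
  then have one: "1 \<in> {1..m}" by simp
  then have "simplicial_map L'' L (\<psi> 1)"
    using \<psi> contiguity_class_simplicial_map by blast
  then show ?thesis
  proof (rule SD_le_pullback[OF assms(1)])
    fix J i j assume J: "J \<subseteq> L''" and ij: "i \<in> {1..m}" "j \<in> {1..m}"
      and pulled_back: "contiguity_class J L' (\<phi> i \<circ> \<psi> 1) (\<phi> j \<circ> \<psi> 1)"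
    have "contiguity_class J L' (\<phi> i \<circ> \<psi> i) (\<phi> i \<circ> \<psi> 1)"
      using \<phi> \<psi> ij one J by (blast intro: contiguity_class_subset contiguity_class_comp_left)
    also note pulled_back
    also have "contiguity_class J L' (\<phi> j \<circ> \<psi> 1) (\<phi> j \<circ> \<psi> j)"
      using \<phi> \<psi> ij one J by (blast intro: contiguity_class_subset contiguity_class_comp_left)
    finally show "contiguity_class J L' (\<phi> i \<circ> \<psi> i) (\<phi> j \<circ> \<psi> j)" .
  qed
qed

lemma SD_comp_right_ge:
  assumes "simplicial_complex L"
    and \<phi>: "\<forall>i\<in>{1..m}. simplicial_map L L' (\<phi> i)"
    and \<psi>: "\<forall>i\<in>{1..m}. \<forall>j\<in>{1..m}. contiguity_class L'' L (\<psi> i) (\<psi> j)"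
    and right_inverse: "\<forall>i\<in>{1..m}. \<exists>\<mu>. simplicial_map L L'' \<mu> \<and> contiguity_class L L (\<psi> i \<circ> \<mu>) id"
  shows "SD L L' m \<phi> \<le> SD L'' L' m (\<lambda>i. \<phi> i \<circ> \<psi> i)"
proof (cases "m = 0")
  case True
  then have "SD L L' m \<phi> = 0"
    by (simp add: SD_eq_0 assms(1))
  then show ?thesis by simp
next
  case False
  then have one: "1 \<in> {1..m}" by simp
  then obtain \<mu> where \<mu>: "simplicial_map L L'' \<mu>" and \<psi>\<mu>: "contiguity_class L L (\<psi> 1 \<circ> \<mu>) id"
    using right_inverse by blast
  show ?thesis
  proof (rule SD_le_pullback[OF assms(1) \<mu>])
    fix J i j assume J: "J \<subseteq> L" and ij: "i \<in> {1..m}" "j \<in> {1..m}"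
      and pulled_back: "contiguity_class J L' (\<phi> i \<circ> \<psi> i \<circ> \<mu>) (\<phi> j \<circ> \<psi> j \<circ> \<mu>)"
    have \<mu>J: "simplicial_map J L'' \<mu>"
      using \<mu> J by (rule simplicial_map_subset)
    have \<psi>\<mu>_cancel: "contiguity_class J L' (\<phi> k \<circ> \<psi> 1 \<circ> \<mu>) (\<phi> k)" if "k \<in> {1..m}" for k
    proof -
      have "simplicial_map L L' (\<phi> k)"
        using \<phi> that by blast
      from contiguity_class_subset[OF contiguity_class_comp_left[OF \<psi>\<mu> this] J]
      show ?thesis by (simp add: comp_assoc)
    qed
    have \<psi>_switch: "contiguity_class J L' (\<phi> k \<circ> \<psi> 1 \<circ> \<mu>) (\<phi> k \<circ> \<psi> k \<circ> \<mu>)" if "k \<in> {1..m}" for k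
      using contiguity_class_comp_right[OF contiguity_class_comp_left[of L'' L "\<psi> 1" "\<psi> k" L' "\<phi> k"] \<mu>J]
        \<psi> \<phi> one that by (simp add: comp_assoc)
    have "contiguity_class J L' (\<phi> i) (\<phi> i \<circ> \<psi> 1 \<circ> \<mu>)"
      using \<psi>\<mu>_cancel[OF ij(1)] by (rule contiguity_class_sym)
    also have "contiguity_class J L' \<dots> (\<phi> i \<circ> \<psi> i \<circ> \<mu>)"
      using ij(1) by (rule \<psi>_switch)
    also note pulled_back
    also have "contiguity_class J L' (\<phi> j \<circ> \<psi> j \<circ> \<mu>) (\<phi> j \<circ> \<psi> 1 \<circ> \<mu>)"
      using \<psi>_switch[OF ij(2)] by (rule contiguity_class_sym)
    also have "contiguity_class J L' \<dots> (\<phi> j)"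
      using ij(2) by (rule \<psi>\<mu>_cancel)
    finally show "contiguity_class J L' (\<phi> i) (\<phi> j)" .
  qed
qed

theorem proposition3p7:
  fixes L :: "'a set set" and L' :: "'b set set" and L'' :: "'c set set" and m :: nat
  assumes cL: "simplicial_complex L" and cL': "simplicial_complex L'"
      and cL'': "simplicial_complex L''"
  shows
  "(\<forall>(\<phi> :: nat \<Rightarrow> 'a \<Rightarrow> 'b) (\<psi> :: nat \<Rightarrow> 'b \<Rightarrow> 'c).
      (\<forall>i\<in>{1..m}. simplicial_map L L' (\<phi> i) \<and> simplicial_map L' L'' (\<psi> i)) \<and>
      (\<forall>i\<in>{1..<m}. contiguity_class L' L'' (\<psi> i) (\<psi> (Suc i)))
    \<longrightarrow> SD L L'' m (\<lambda>i. \<psi> i \<circ> \<phi> i) \<le> SD L L' m \<phi> \<and>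
        ((\<forall>i\<in>{1..m}. \<exists>\<mu>. simplicial_map L'' L' \<mu> \<and> contiguity_class L' L' (\<mu> \<circ> \<psi> i) id) \<and>
         (\<forall>i\<in>{1..m}. \<forall>j\<in>{1..m}. i \<noteq> j \<longrightarrow>
             contiguity_class L L'' (\<psi> i \<circ> \<phi> i) (\<psi> j \<circ> \<phi> j))
         \<longrightarrow> SD L L'' m (\<lambda>i. \<psi> i \<circ> \<phi> i) = SD L L' m \<phi>))
   \<and>
   (\<forall>(\<phi> :: nat \<Rightarrow> 'a \<Rightarrow> 'b) (\<psi> :: nat \<Rightarrow> 'c \<Rightarrow> 'a).
      (\<forall>i\<in>{1..m}. simplicial_map L L' (\<phi> i) \<and> simplicial_map L'' L (\<psi> i)) \<and>
      (\<forall>i\<in>{1..<m}. contiguity_class L'' L (\<psi> i) (\<psi> (Suc i)))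
    \<longrightarrow> SD L'' L' m (\<lambda>i. \<phi> i \<circ> \<psi> i) \<le> SD L L' m \<phi> \<and>
        ((\<forall>i\<in>{1..m}. \<exists>\<mu>. simplicial_map L L'' \<mu> \<and> contiguity_class L L (\<psi> i \<circ> \<mu>) id) \<and>
         (\<forall>i\<in>{1..m}. \<forall>j\<in>{1..m}. i \<noteq> j \<longrightarrow>
             contiguity_class L'' L' (\<phi> i \<circ> \<psi> i) (\<phi> j \<circ> \<psi> j))
         \<longrightarrow> SD L'' L' m (\<lambda>i. \<phi> i \<circ> \<psi> i) = SD L L' m \<phi>))"
proof (intro conjI allI impI; elim conjE)
  fix \<phi> :: "nat \<Rightarrow> 'a \<Rightarrow> 'b" and \<psi> :: "nat \<Rightarrow> 'b \<Rightarrow> 'c"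
  assume maps: "\<forall>i\<in>{1..m}. simplicial_map L L' (\<phi> i) \<and> simplicial_map L' L'' (\<psi> i)"
    and consecutive: "\<forall>i\<in>{1..<m}. contiguity_class L' L'' (\<psi> i) (\<psi> (Suc i))"
  have \<phi>: "\<forall>i\<in>{1..m}. simplicial_map L L' (\<phi> i)"
    using maps by blast
  have \<psi>: "\<forall>i\<in>{1..m}. \<forall>j\<in>{1..m}. contiguity_class L' L'' (\<psi> i) (\<psi> j)"
    using maps by (blast intro: contiguity_class_of_consecutive[OF consecutive])
  show "SD L L'' m (\<lambda>i. \<psi> i \<circ> \<phi> i) \<le> SD L L' m \<phi>"
    by (rule SD_comp_left_le[OF cL \<phi> \<psi>])
  assume "\<forall>i\<in>{1..m}. \<exists>\<mu>. simplicial_map L'' L' \<mu> \<and> contiguity_class L' L' (\<mu> \<circ> \<psi> i) id"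
  then show "SD L L'' m (\<lambda>i. \<psi> i \<circ> \<phi> i) = SD L L' m \<phi>"
    using SD_comp_left_le[OF cL \<phi> \<psi>] SD_comp_left_ge[OF cL \<phi> \<psi>] by (blast intro: antisym)
next
  fix \<phi> :: "nat \<Rightarrow> 'a \<Rightarrow> 'b" and \<psi> :: "nat \<Rightarrow> 'c \<Rightarrow> 'a"
  assume maps: "\<forall>i\<in>{1..m}. simplicial_map L L' (\<phi> i) \<and> simplicial_map L'' L (\<psi> i)"
    and consecutive: "\<forall>i\<in>{1..<m}. contiguity_class L'' L (\<psi> i) (\<psi> (Suc i))"
  have \<phi>: "\<forall>i\<in>{1..m}. simplicial_map L L' (\<phi> i)"
    using maps by blast
  have \<psi>: "\<forall>i\<in>{1..m}. \<forall>j\<in>{1..m}. contiguity_class L'' L (\<psi> i) (\<psi> j)"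
    using maps by (blast intro: contiguity_class_of_consecutive[OF consecutive])
  show "SD L'' L' m (\<lambda>i. \<phi> i \<circ> \<psi> i) \<le> SD L L' m \<phi>"
    by (rule SD_comp_right_le[OF cL'' \<phi> \<psi>])
  assume "\<forall>i\<in>{1..m}. \<exists>\<mu>. simplicial_map L L'' \<mu> \<and> contiguity_class L L (\<psi> i \<circ> \<mu>) id"
  then show "SD L'' L' m (\<lambda>i. \<phi> i \<circ> \<psi> i) = SD L L' m \<phi>"
    using SD_comp_right_le[OF cL'' \<phi> \<psi>] SD_comp_right_ge[OF cL \<phi> \<psi>] by (blast intro: antisym)
qed

end
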